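(* Let $f:\mathbb{R}^d\to\mathbb{R}$ be differentiable with $L$-Lipschitz gradient, and consider the elastic-scheduling iteration described in the context with learning rate $\alpha\le\frac{1}{6L}$. Then for every node $i$ and every iteration $t\ge0$, $$\mathbb{E}\|\vec x_t-\vec v_t^i\|^2\le 9\sigma^2\alpha^2.$$
   Context: There are $p$ nodes $\mathcal P=\{1,\dots,p\}$, all starting from $\vec v_0^i=\vec 0$, and $\vec x_0=\vec 0$. At iteration $t$ each node $j$ computes $g_t^j=\tilde G(\vec v_t^j)$, a stochastic gradient at its view with $\mathbb{E}\|g_t^j-\nabla f(\vec v_t^j)\|^2\le\sigma^2$, and broadcasts it. A set $\mathcal L_t^i\subseteq\mathcal P$ with $i\in\mathcal L_t^i$ (fixed independently of the randomness) is the set of nodes whose iteration-$t$ gradient reaches node $i$ during iteration $t$; all other iteration-$t$ gradients reach $i$ during iteration $t+1$. Node $i$ substitutes its own gradient for missing ones and corrects afterwards: $$\vec v_{t+1}^i=\vec v_t^i-\frac{\alpha}{p}\Big[\sum_{j\in\mathcal L_t^i}g_t^j+\sum_{j\in\mathcal P\setminus\mathcal L_t^i}g_t^i+\mathbf 1_{t>0}\sum_{j\in\mathcal P\setminus\mathcal L_{t-1}^i}\big(g_{t-1}^j-g_{t-1}^i\big)\Big].$$ The global parameter is $\vec x_{t+1}=\vec x_t-\frac{\alpha}{p}\sum_{j\in\mathcal P}g_t^j$; consequently $\vec v_t^i=\vec x_t+\frac{\alpha}{p}\sum_{j\in\mathcal P\setminus\mathcal L_{t-1}^i}(g_{t-1}^i-g_{t-1}^j)$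 for $t>0$. *)

theory Defs
  imports "HOL-Analysis.Analysis" "HOL-Probability.Probability"
begin

text \<open>Nodes are 1..p. Ls t i is the set of nodes whose
iteration-t gradient reaches node i during iteration t. g t j w is the
stochastic gradient computed by node j at iteration t (outcome w).\<close>

primrec vview :: "real \<Rightarrow> nat \<Rightarrow> (nat \<Rightarrow> nat \<Rightarrow> nat set) \<Rightarrow>
    (nat \<Rightarrow> nat \<Rightarrow> 'w \<Rightarrow> 'v::real_vector) \<Rightarrow> nat \<Rightarrow> nat \<Rightarrow> 'w \<Rightarrow> 'v" where
  "vview \<alpha> p Ls g 0 i w = 0"
| "vview \<alpha> p Ls g (Suc t) i w =
     vview \<alpha> p Ls g t i w - (\<alpha> / real p) *\<^sub>R
       ((\<Sum>j\<in>Ls t i. g t j w)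
        + (\<Sum>j\<in>{1..p} - Ls t i. g t i w)
        + (if t > 0 then (\<Sum>j\<in>{1..p} - Ls (t - 1) i. g (t - 1) j w - g (t - 1) i w) else 0))"

primrec xglob :: "real \<Rightarrow> nat \<Rightarrow> (nat \<Rightarrow> nat \<Rightarrow> 'w \<Rightarrow> 'v::real_vector) \<Rightarrow> nat \<Rightarrow> 'w \<Rightarrow> 'v" where
  "xglob \<alpha> p g 0 w = 0"
| "xglob \<alpha> p g (Suc t) w = xglob \<alpha> p g t w - (\<alpha> / real p) *\<^sub>R (\<Sum>j\<in>{1..p}. g t j w)"

end

theory Submission imports Defs begin

(* Every substituted gradient is corrected one iteration later, so the view of node i differs
   from the global parameter only by the pending correction
     x_(t+1) - v_(t+1)^i = -(alpha/p) * sum over j not in L_t^i of (g_t^j - g_t^i),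
   a sum of at most p - 1 gradient differences. Each difference is controlled by the two noise
   terms and, via the Lipschitz gradient, by the deviations x_t - v_t^j and x_t - v_t^i. Hence a
   bound D on the expected squared deviations at iteration t yields the bound
   alpha^2 (6 sigma^2 + 12 L^2 D) at iteration t + 1, and for L alpha <= 1/6 the bound
   D = 9 sigma^2 alpha^2 reproduces itself. *)

lemma sum_split_substituted:
  fixes h :: "nat \<Rightarrow> 'v::ab_group_add"
  assumes "A \<subseteq> P" and "finite P"
  shows "(\<Sum>j\<in>P. h j) = (\<Sum>j\<in>A. h j) + (\<Sum>j\<in>P - A. h i) + (\<Sum>j\<in>P - A. h j - h i)"
proof -
  have "(\<Sum>j\<in>P. h j) = (\<Sum>j\<in>A. h j) + (\<Sum>j\<in>P - A. h j)"
    using sum.subset_diff[OF assms] by (simp add: add.commute)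
  then show ?thesis by (simp add: sum_subtractf del: sum_constant)
qed

lemma xglob_minus_vview_Suc:
  fixes g :: "nat \<Rightarrow> nat \<Rightarrow> 'w \<Rightarrow> 'v::real_vector"
  assumes "\<And>s. Ls s i \<subseteq> {1..p}"
  shows "xglob \<alpha> p g (Suc t) w - vview \<alpha> p Ls g (Suc t) i w =
    - (\<alpha> / real p) *\<^sub>R (\<Sum>j\<in>{1..p} - Ls t i. g t j w - g t i w)"
  using assms
proof (induction t)
  case 0
  then show ?case
    using sum_split_substituted[of "Ls 0 i" "{1..p}" "\<lambda>j. g 0 j w" i]
    by (simp add: algebra_simps del: sum_constant)
next
  case (Suc t)
  then show ?case
    using sum_split_substituted[of "Ls (Suc t) i" "{1..p}" "\<lambda>j. g (Suc t) j w" i]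
    by (simp add: algebra_simps scaleR_add_right del: sum_constant)
qed

lemma vview_measurable:
  fixes g :: "nat \<Rightarrow> nat \<Rightarrow> 'w \<Rightarrow> 'v::euclidean_space"
  assumes "\<And>s k. k \<in> {1..p} \<Longrightarrow> Ls s k \<subseteq> {1..p}"
    and "\<And>s j. j \<in> {1..p} \<Longrightarrow> g s j \<in> borel_measurable M"
    and "i \<in> {1..p}"
  shows "vview \<alpha> p Ls g t i \<in> borel_measurable M"
proof (induction t)
  case (Suc t)
  have "\<And>s j. j \<in> Ls s i \<Longrightarrow> g s j \<in> borel_measurable M" and "g s i \<in> borel_measurable M" for s
    using assms by blast+
  with Suc assms(2) show ?case
    by (cases t) (auto simp del: sum_constant intro!: borel_measurable_diff borel_measurable_scaleR
        borel_measurable_add borel_measurable_sum)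
qed simp

lemma xglob_measurable:
  fixes g :: "nat \<Rightarrow> nat \<Rightarrow> 'w \<Rightarrow> 'v::euclidean_space"
  assumes "\<And>s j. j \<in> {1..p} \<Longrightarrow> g s j \<in> borel_measurable M"
  shows "xglob \<alpha> p g t \<in> borel_measurable M"
  by (induction t) (use assms in \<open>auto intro!: borel_measurable_diff borel_measurable_scaleR borel_measurable_sum\<close>)

lemma norm_sum_squared_le:
  fixes f :: "nat \<Rightarrow> 'v::real_normed_vector"
  shows "(norm (\<Sum>j\<in>S. f j))\<^sup>2 \<le> real (card S) * (\<Sum>j\<in>S. (norm (f j))\<^sup>2)"
proof -
  have "(norm (\<Sum>j\<in>S. f j))\<^sup>2 \<le> (\<Sum>j\<in>S. norm (f j))\<^sup>2"
    by (simp add: norm_sum power_mono)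
  also have "\<dots> \<le> (\<Sum>j\<in>S. (norm (f j))\<^sup>2) * card S"
    by (rule sum_squared_le_sum_of_squares)
  finally show ?thesis by (simp add: mult.commute)
qed

lemma square_sum3_le: "(a + b + c)\<^sup>2 \<le> 3 * (a\<^sup>2 + b\<^sup>2 + c\<^sup>2)" for a b c :: real
proof -
  have "0 \<le> (a - b)\<^sup>2 + (b - c)\<^sup>2 + (a - c)\<^sup>2" by simp
  then show ?thesis by (simp add: power2_eq_square algebra_simps)
qed

lemma square_sum2_le: "(a + b)\<^sup>2 \<le> 2 * (a\<^sup>2 + b\<^sup>2)" for a b :: real
proof -
  have "0 \<le> (a - b)\<^sup>2" by simp
  then show ?thesis by (simp add: power2_eq_square algebra_simps)
qed

lemma norm_diff_squared_le_noise_deviation: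
  fixes grad :: "'v::real_normed_vector \<Rightarrow> 'v"
  assumes lip: "norm (grad u - grad v) \<le> L * norm (u - v)" and "L \<ge> 0"
  shows "(norm (a - b))\<^sup>2 \<le> 3 * (norm (a - grad u))\<^sup>2 + 3 * (norm (b - grad v))\<^sup>2
           + 6 * L\<^sup>2 * (norm (x - u))\<^sup>2 + 6 * L\<^sup>2 * (norm (x - v))\<^sup>2"
proof -
  have "norm (u - v) \<le> norm (x - u) + norm (x - v)"
    using norm_triangle_ineq4[of "x - v" "x - u"] by (simp add: norm_minus_commute)
  with lip \<open>L \<ge> 0\<close> have grad_diff: "norm (grad u - grad v) \<le> L * (norm (x - u) + norm (x - v))"
    by (meson mult_left_mono order_trans)
  have "a - b = (a - grad u) + (grad u - grad v) - (b - grad v)" by simp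
  then have "norm (a - b) \<le> norm (a - grad u) + norm (grad u - grad v) + norm (b - grad v)"
    by (metis norm_triangle_ineq norm_triangle_ineq4 add_right_mono order_trans)
  also have "\<dots> \<le> norm (a - grad u) + L * (norm (x - u) + norm (x - v)) + norm (b - grad v)"
    using grad_diff by simp
  finally have "(norm (a - b))\<^sup>2 \<le> (norm (a - grad u) + L * (norm (x - u) + norm (x - v)) + norm (b - grad v))\<^sup>2"
    by (simp add: power_mono)
  also have "\<dots> \<le> 3 * ((norm (a - grad u))\<^sup>2 + L\<^sup>2 * (norm (x - u) + norm (x - v))\<^sup>2 + (norm (b - grad v))\<^sup>2)"
    using square_sum3_le[of "norm (a - grad u)" "L * (norm (x - u) + norm (x - v))" "norm (b - grad v)"]
    by (simp only: power_mult_distrib)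
  also have "\<dots> \<le> 3 * ((norm (a - grad u))\<^sup>2 + L\<^sup>2 * (2 * ((norm (x - u))\<^sup>2 + (norm (x - v))\<^sup>2)) + (norm (b - grad v))\<^sup>2)"
    using square_sum2_le by (simp add: mult_left_mono)
  finally show ?thesis by (simp add: algebra_simps)
qed

lemma nn_integral_le_scaled_sum:
  fixes F :: "nat \<Rightarrow> 'w \<Rightarrow> real"
  assumes "finite S" and "c \<ge> 0" and "B \<ge> 0"
    and meas: "\<And>j. j \<in> S \<Longrightarrow> F j \<in> borel_measurable M"
    and nonneg: "\<And>j w. j \<in> S \<Longrightarrow> F j w \<ge> 0"
    and pointwise: "\<And>w. h w \<le> c * (\<Sum>j\<in>S. F j w)"
    and bound: "\<And>j. j \<in> S \<Longrightarrow> (\<integral>\<^sup>+ w. ennreal (F j w) \<partial>M) \<le> ennreal B"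
  shows "(\<integral>\<^sup>+ w. ennreal (h w) \<partial>M) \<le> ennreal (c * real (card S) * B)"
proof -
  have "(\<integral>\<^sup>+ w. ennreal (h w) \<partial>M) \<le> (\<integral>\<^sup>+ w. ennreal c * (\<Sum>j\<in>S. ennreal (F j w)) \<partial>M)"
  proof (rule nn_integral_mono)
    fix w
    have "ennreal (h w) \<le> ennreal (c * (\<Sum>j\<in>S. F j w))"
      using pointwise by (rule ennreal_leI)
    then show "ennreal (h w) \<le> ennreal c * (\<Sum>j\<in>S. ennreal (F j w))"
      using \<open>c \<ge> 0\<close> nonneg by (simp add: ennreal_mult sum_ennreal sum_nonneg)
  qed
  also have "\<dots> = ennreal c * (\<Sum>j\<in>S. \<integral>\<^sup>+ w. ennreal (F j w) \<partial>M)"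
    using meas by (simp add: nn_integral_cmult nn_integral_sum)
  also have "\<dots> \<le> ennreal c * (\<Sum>j\<in>S. ennreal B)"
    using bound by (intro mult_left_mono sum_mono) auto
  also have "\<dots> = ennreal (c * real (card S) * B)"
    using \<open>c \<ge> 0\<close> \<open>B \<ge> 0\<close> by (simp add: ennreal_mult ennreal_of_nat_eq_real_of_nat mult.assoc)
  finally show ?thesis .
qed

lemma deviation_Suc_squared_le:
  fixes grad :: "'v::real_normed_vector \<Rightarrow> 'v" and g :: "nat \<Rightarrow> nat \<Rightarrow> 'w \<Rightarrow> 'v"
    and \<alpha> :: real and t :: nat and w :: 'w
  assumes "\<And>s. Ls s i \<subseteq> {1..p}"
    and lip: "\<And>x y. norm (grad x - grad y) \<le> L * norm (x - y)" and "L \<ge> 0"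
  defines "e j \<equiv> (norm (g t j w - grad (vview \<alpha> p Ls g t j w)))\<^sup>2"
    and "d j \<equiv> (norm (xglob \<alpha> p g t w - vview \<alpha> p Ls g t j w))\<^sup>2"
    and "S \<equiv> {1..p} - Ls t i"
  shows "(norm (xglob \<alpha> p g (Suc t) w - vview \<alpha> p Ls g (Suc t) i w))\<^sup>2
    \<le> (\<alpha> / real p)\<^sup>2 * real (card S) * (\<Sum>j\<in>S. 3 * e j + 3 * e i + 6 * L\<^sup>2 * d j + 6 * L\<^sup>2 * d i)"
proof -
  have "xglob \<alpha> p g (Suc t) w - vview \<alpha> p Ls g (Suc t) i w
      = - (\<alpha> / real p) *\<^sub>R (\<Sum>j\<in>S. g t j w - g t i w)"
    unfolding S_def using assms(1) by (rule xglob_minus_vview_Suc)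
  then have "(norm (xglob \<alpha> p g (Suc t) w - vview \<alpha> p Ls g (Suc t) i w))\<^sup>2
      = (\<alpha> / real p)\<^sup>2 * (norm (\<Sum>j\<in>S. g t j w - g t i w))\<^sup>2"
    by (simp only: norm_scaleR power_mult_distrib power2_abs power2_minus)
  also have "\<dots> \<le> (\<alpha> / real p)\<^sup>2 * (real (card S) * (\<Sum>j\<in>S. (norm (g t j w - g t i w))\<^sup>2))"
    by (intro mult_left_mono norm_sum_squared_le) simp
  also have "\<dots> \<le> (\<alpha> / real p)\<^sup>2 * (real (card S) * (\<Sum>j\<in>S. 3 * e j + 3 * e i + 6 * L\<^sup>2 * d j + 6 * L\<^sup>2 * d i))"
    unfolding e_def d_def
    by (intro mult_left_mono sum_mono norm_diff_squared_le_noise_deviation lip \<open>L \<ge> 0\<close>) simp_all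
  finally show ?thesis by (simp add: mult.assoc)
qed

lemma nn_integral_noise_deviation_le:
  fixes e\<^sub>1 e\<^sub>2 d\<^sub>1 d\<^sub>2 :: "'w \<Rightarrow> real"
  assumes meas: "e\<^sub>1 \<in> borel_measurable M" "e\<^sub>2 \<in> borel_measurable M"
      "d\<^sub>1 \<in> borel_measurable M" "d\<^sub>2 \<in> borel_measurable M"
    and nonneg: "\<And>w. e\<^sub>1 w \<ge> 0" "\<And>w. e\<^sub>2 w \<ge> 0" "\<And>w. d\<^sub>1 w \<ge> 0" "\<And>w. d\<^sub>2 w \<ge> 0"
    and bounds: "(\<integral>\<^sup>+ w. ennreal (e\<^sub>1 w) \<partial>M) \<le> ennreal (\<sigma>\<^sup>2)" "(\<integral>\<^sup>+ w. ennreal (e\<^sub>2 w) \<partial>M) \<le> ennreal (\<sigma>\<^sup>2)"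
      "(\<integral>\<^sup>+ w. ennreal (d\<^sub>1 w) \<partial>M) \<le> ennreal D" "(\<integral>\<^sup>+ w. ennreal (d\<^sub>2 w) \<partial>M) \<le> ennreal D"
    and "D \<ge> 0"
  shows "(\<integral>\<^sup>+ w. ennreal (3 * e\<^sub>1 w + 3 * e\<^sub>2 w + 6 * L\<^sup>2 * d\<^sub>1 w + 6 * L\<^sup>2 * d\<^sub>2 w) \<partial>M)
           \<le> ennreal (6 * \<sigma>\<^sup>2 + 12 * L\<^sup>2 * D)"
proof -
  have "ennreal (3 * e\<^sub>1 w + 3 * e\<^sub>2 w + 6 * L\<^sup>2 * d\<^sub>1 w + 6 * L\<^sup>2 * d\<^sub>2 w)
      = 3 * ennreal (e\<^sub>1 w) + 3 * ennreal (e\<^sub>2 w) + ennreal (6 * L\<^sup>2) * ennreal (d\<^sub>1 w)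
        + ennreal (6 * L\<^sup>2) * ennreal (d\<^sub>2 w)" for w
    using nonneg by (simp add: ennreal_plus ennreal_mult)
  then have "(\<integral>\<^sup>+ w. ennreal (3 * e\<^sub>1 w + 3 * e\<^sub>2 w + 6 * L\<^sup>2 * d\<^sub>1 w + 6 * L\<^sup>2 * d\<^sub>2 w) \<partial>M)
      = 3 * (\<integral>\<^sup>+ w. ennreal (e\<^sub>1 w) \<partial>M) + 3 * (\<integral>\<^sup>+ w. ennreal (e\<^sub>2 w) \<partial>M)
        + ennreal (6 * L\<^sup>2) * (\<integral>\<^sup>+ w. ennreal (d\<^sub>1 w) \<partial>M)
        + ennreal (6 * L\<^sup>2) * (\<integral>\<^sup>+ w. ennreal (d\<^sub>2 w) \<partial>M)"
    using meas by (simp add: nn_integral_add nn_integral_cmult)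
  also have "\<dots> \<le> 3 * ennreal (\<sigma>\<^sup>2) + 3 * ennreal (\<sigma>\<^sup>2) + ennreal (6 * L\<^sup>2) * ennreal D
      + ennreal (6 * L\<^sup>2) * ennreal D"
    using bounds by (intro add_mono mult_left_mono) auto
  also have "\<dots> = ennreal (3 * \<sigma>\<^sup>2 + 3 * \<sigma>\<^sup>2 + 6 * L\<^sup>2 * D + 6 * L\<^sup>2 * D)"
    by (simp only: ennreal_plus ennreal_mult ennreal_numeral \<open>D \<ge> 0\<close> zero_le_power2
        zero_le_numeral mult_nonneg_nonneg add_nonneg_nonneg)
  finally show ?thesis by (simp add: algebra_simps)
qed

lemma expected_deviation_Suc_le:
  fixes grad :: "'v::euclidean_space \<Rightarrow> 'v" and g :: "nat \<Rightarrow> nat \<Rightarrow> 'w \<Rightarrow> 'v"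
  assumes Ls: "\<And>s k. k \<in> {1..p} \<Longrightarrow> k \<in> Ls s k \<and> Ls s k \<subseteq> {1..p}"
    and g_meas: "\<And>s j. j \<in> {1..p} \<Longrightarrow> g s j \<in> borel_measurable M"
    and noise: "\<And>s j. j \<in> {1..p} \<Longrightarrow>
      (\<integral>\<^sup>+ w. ennreal ((norm (g s j w - grad (vview \<alpha> p Ls g s j w)))\<^sup>2) \<partial>M) \<le> ennreal (\<sigma>\<^sup>2)"
    and lip: "\<And>x y. norm (grad x - grad y) \<le> L * norm (x - y)" and "L \<ge> 0"
    and dev: "\<And>j. j \<in> {1..p} \<Longrightarrow>
      (\<integral>\<^sup>+ w. ennreal ((norm (xglob \<alpha> p g t w - vview \<alpha> p Ls g t j w))\<^sup>2) \<partial>M) \<le> ennreal D"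
    and "D \<ge> 0" and i: "i \<in> {1..p}"
  shows "(\<integral>\<^sup>+ w. ennreal ((norm (xglob \<alpha> p g (Suc t) w - vview \<alpha> p Ls g (Suc t) i w))\<^sup>2) \<partial>M)
           \<le> ennreal (\<alpha>\<^sup>2 * (6 * \<sigma>\<^sup>2 + 12 * L\<^sup>2 * D))"
proof -
  define S where "S = {1..p} - Ls t i"
  define c where "c = (\<alpha> / real p)\<^sup>2 * real (card S)"
  define e where "e j w = (norm (g t j w - grad (vview \<alpha> p Ls g t j w)))\<^sup>2" for j w
  define d where "d j w = (norm (xglob \<alpha> p g t w - vview \<alpha> p Ls g t j w))\<^sup>2" for j w
  have "S \<subseteq> {1..p} - {i}"
    using Ls[OF i] by (auto simp: S_def)
  then have "card S \<le> p - 1"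
    using i by (metis card_mono finite_Diff finite_atLeastAtMost card_Diff_singleton card_atLeastAtMost
        diff_Suc_1)
  then have "card S < p"
    using i by auto
  then have "real (card S) * real (card S) \<le> real p * real p"
    by (intro mult_mono) auto
  then have c_le: "c * real (card S) \<le> \<alpha>\<^sup>2"
    using mult_left_mono[of _ _ "\<alpha>\<^sup>2"] \<open>card S < p\<close>
    unfolding c_def by (simp add: power_divide divide_le_eq mult.assoc power2_eq_square)
  have "lipschitz_on L UNIV grad"
    using lip \<open>L \<ge> 0\<close> by (intro lipschitz_onI) (auto simp: dist_norm)
  then have "grad \<in> borel_measurable borel"
    by (intro borel_measurable_continuous_onI lipschitz_on_continuous_on)
  then have meas: "e j \<in> borel_measurable M" "d j \<in> borel_measurable M" if "j \<in> {1..p}" for j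
    using that g_meas vview_measurable[of p Ls g M, OF _ g_meas that] xglob_measurable[OF g_meas]
    unfolding e_def[abs_def] d_def[abs_def] using Ls by (auto simp del: power2_norm_eq_inner)
  have "(\<integral>\<^sup>+ w. ennreal ((norm (xglob \<alpha> p g (Suc t) w - vview \<alpha> p Ls g (Suc t) i w))\<^sup>2) \<partial>M)
      \<le> ennreal (c * real (card S) * (6 * \<sigma>\<^sup>2 + 12 * L\<^sup>2 * D))"
  proof (rule nn_integral_le_scaled_sum)
    fix j assume "j \<in> S"
    then have j: "j \<in> {1..p}" using \<open>S \<subseteq> _\<close> by blast
    show "(\<lambda>w. 3 * e j w + 3 * e i w + 6 * L\<^sup>2 * d j w + 6 * L\<^sup>2 * d i w) \<in> borel_measurable M"
      using meas[OF j] meas[OF i] by measurable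
    show "(\<integral>\<^sup>+ w. ennreal (3 * e j w + 3 * e i w + 6 * L\<^sup>2 * d j w + 6 * L\<^sup>2 * d i w) \<partial>M)
        \<le> ennreal (6 * \<sigma>\<^sup>2 + 12 * L\<^sup>2 * D)"
      using meas[OF j] meas[OF i] noise[OF j] noise[OF i] dev[OF j] dev[OF i] \<open>D \<ge> 0\<close>
      unfolding e_def d_def by (intro nn_integral_noise_deviation_le) auto
  next
    fix w
    show "(norm (xglob \<alpha> p g (Suc t) w - vview \<alpha> p Ls g (Suc t) i w))\<^sup>2
        \<le> c * (\<Sum>j\<in>S. 3 * e j w + 3 * e i w + 6 * L\<^sup>2 * d j w + 6 * L\<^sup>2 * d i w)"
      unfolding c_def S_def e_def d_def using Ls[OF i]
      by (intro deviation_Suc_squared_le lip \<open>L \<ge> 0\<close>) blast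
  qed (use \<open>D \<ge> 0\<close> in \<open>simp_all add: S_def c_def e_def d_def\<close>)
  also have "\<dots> \<le> ennreal (\<alpha>\<^sup>2 * (6 * \<sigma>\<^sup>2 + 12 * L\<^sup>2 * D))"
    using c_le \<open>D \<ge> 0\<close> by (intro ennreal_leI mult_right_mono) simp_all
  finally show ?thesis .
qed

lemma expected_deviation_le:
  fixes grad :: "'v::euclidean_space \<Rightarrow> 'v" and g :: "nat \<Rightarrow> nat \<Rightarrow> 'w \<Rightarrow> 'v"
  assumes Ls: "\<And>s k. k \<in> {1..p} \<Longrightarrow> k \<in> Ls s k \<and> Ls s k \<subseteq> {1..p}"
    and g_meas: "\<And>s j. j \<in> {1..p} \<Longrightarrow> g s j \<in> borel_measurable M"
    and noise: "\<And>s j. j \<in> {1..p} \<Longrightarrow>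
      (\<integral>\<^sup>+ w. ennreal ((norm (g s j w - grad (vview \<alpha> p Ls g s j w)))\<^sup>2) \<partial>M) \<le> ennreal (\<sigma>\<^sup>2)"
    and lip: "\<And>x y. norm (grad x - grad y) \<le> L * norm (x - y)" and "L \<ge> 0"
    and "\<alpha> \<ge> 0" and "L * \<alpha> \<le> 1 / 6" and "i \<in> {1..p}"
  shows "(\<integral>\<^sup>+ w. ennreal ((norm (xglob \<alpha> p g t w - vview \<alpha> p Ls g t i w))\<^sup>2) \<partial>M)
           \<le> ennreal (9 * \<sigma>\<^sup>2 * \<alpha>\<^sup>2)"
  using \<open>i \<in> {1..p}\<close>
proof (induction t arbitrary: i)
  case (Suc t)
  have step_size: "(L * \<alpha>)\<^sup>2 \<le> (1 / 6)\<^sup>2"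
    using assms by (intro power_mono) auto
  have "108 * \<sigma>\<^sup>2 * (L * \<alpha>)\<^sup>2 \<le> 3 * \<sigma>\<^sup>2"
    using mult_left_mono[OF step_size, of "108 * \<sigma>\<^sup>2"] by (simp add: power_divide)
  then have "6 * \<sigma>\<^sup>2 + 12 * L\<^sup>2 * (9 * \<sigma>\<^sup>2 * \<alpha>\<^sup>2) \<le> 9 * \<sigma>\<^sup>2"
    by (simp add: power_mult_distrib)
  then have contraction: "\<alpha>\<^sup>2 * (6 * \<sigma>\<^sup>2 + 12 * L\<^sup>2 * (9 * \<sigma>\<^sup>2 * \<alpha>\<^sup>2)) \<le> 9 * \<sigma>\<^sup>2 * \<alpha>\<^sup>2"
    by (simp add: mult_left_mono mult.commute)
  have "(\<integral>\<^sup>+ w. ennreal ((norm (xglob \<alpha> p g (Suc t) w - vview \<alpha> p Ls g (Suc t) i w))\<^sup>2) \<partial>M)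
      \<le> ennreal (\<alpha>\<^sup>2 * (6 * \<sigma>\<^sup>2 + 12 * L\<^sup>2 * (9 * \<sigma>\<^sup>2 * \<alpha>\<^sup>2)))"
    by (rule expected_deviation_Suc_le[OF Ls g_meas noise lip \<open>L \<ge> 0\<close> Suc.IH _ Suc.prems]) auto
  also have "\<dots> \<le> ennreal (9 * \<sigma>\<^sup>2 * \<alpha>\<^sup>2)"
    using contraction by (rule ennreal_leI)
  finally show ?case .
qed simp

theorem mainTheorem11:
  fixes f :: "real^'d \<Rightarrow> real" and grad :: "real^'d \<Rightarrow> real^'d"
    and L \<alpha> \<sigma> :: real and p :: nat and Ls :: "nat \<Rightarrow> nat \<Rightarrow> nat set"
    and M :: "'w measure" and g :: "nat \<Rightarrow> nat \<Rightarrow> 'w \<Rightarrow> real^'d"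
    and i t :: nat
  assumes "prob_space M"
    and "\<forall>x. (f has_derivative (\<lambda>h. grad x \<bullet> h)) (at x)"
    and "\<forall>x y. norm (grad x - grad y) \<le> L * norm (x - y)"
    and "L > 0" and "\<alpha> > 0" and "\<alpha> \<le> 1 / (6 * L)" and "p \<ge> 1"
    and "\<forall>s k. k \<in> {1..p} \<longrightarrow> k \<in> Ls s k \<and> Ls s k \<subseteq> {1..p}"
    and "\<forall>s j. j \<in> {1..p} \<longrightarrow> g s j \<in> borel_measurable M"
    and "\<forall>s j. j \<in> {1..p} \<longrightarrow>
           (\<integral>\<^sup>+ w. ennreal ((norm (g s j w - grad (vview \<alpha> p Ls g s j w)))\<^sup>2) \<partial>M) \<le> ennreal (\<sigma>\<^sup>2)"
    and "i \<in> {1..p}"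
  shows "(\<integral>\<^sup>+ w. ennreal ((norm (xglob \<alpha> p g t w - vview \<alpha> p Ls g t i w))\<^sup>2) \<partial>M)
           \<le> ennreal (9 * \<sigma>\<^sup>2 * \<alpha>\<^sup>2)"
  \<comment> \<open>Neither the normalisation of M nor the differentiability of f enters the bound.\<close>
proof (rule expected_deviation_le)
  show "L * \<alpha> \<le> 1 / 6"
    using \<open>L > 0\<close> \<open>\<alpha> \<le> 1 / (6 * L)\<close> by (simp add: field_simps)
next
  show "\<And>s k. k \<in> {1..p} \<Longrightarrow> k \<in> Ls s k \<and> Ls s k \<subseteq> {1..p}"
    and "\<And>s j. j \<in> {1..p} \<Longrightarrow> g s j \<in> borel_measurable M"
    and "\<And>s j. j \<in> {1..p} \<Longrightarrow>
      (\<integral>\<^sup>+ w. ennreal ((norm (g s j w - grad (vview \<alpha> p Ls g s j w)))\<^sup>2) \<partial>M) \<le> ennreal (\<sigma>\<^sup>2)"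
    and "\<And>x y. norm (grad x - grad y) \<le> L * norm (x - y)"
    using assms(3,8-10) by blast+
qed (use assms(4,5,11) in simp_all)

end
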